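(* Let $-1<q<1$ and let $X(t)$ be the centered $q$-Poisson process. Then for every $m\ge0$ and $t>0$ the full stochastic measure $\psi_m(t)=\lim_{\delta(\mathcal I)\to0}\psi_m(t;\mathcal I)$ exists as a limit in the $L^2$-norm with respect to $\mathbb E$, and $\psi_m(t)=C_{q,m}(X(t),t)$.
   Context: $q$-Fock space over $H=L^2(\mathbb R_+,dx)$: the algebraic Fock space $\bigoplus_{k\ge0}H^{\otimes k}$ (vacuum $\Omega$) with inner product $\langle f_1\otimes\cdots\otimes f_k,g_1\otimes\cdots\otimes g_n\rangle_q=\delta_{kn}\sum_{\sigma\in\mathrm{Sym}(n)}q^{i(\sigma)}\prod_j\langle f_j,g_{\sigma(j)}\rangle$ ($i(\sigma)$ = number of inversions), completed to $\mathcal F_q(H)$. For $f\in L^2\cap L^\infty(\mathbb R_+)$: $a^*(f)\Omega=f$, $a^*(f)(g_1\otimes\cdots\otimes g_n)=f\otimes g_1\otimes\cdots\otimes g_n$; $a(f)\Omega=0$, $a(f)(g_1\otimes\cdots\otimes g_n)=\sum_{k=1}^nq^{k-1}\langle f,g_k\rangle g_1\otimes\cdots\widehat{g_k}\cdots\otimes g_n$; $p(f)\Omega=0$, $p(f)(g_1\otimes\cdots\otimes g_n)=\sum_{k=1}^nq^{k-1}(fg_k)\otimes g_1\otimes\cdots\widehat{g_k}\cdots\otimes g_n$ (hat = omitted). The centered $q$-Poisson process is $X(t)=a^*(\mathbf 1_{[0,t)})+a(\mathbf 1_{[0,t)})+p(\mathbf 1_{[0,t)})$. $\mathbb E[A]=\langle\Omega,A\Omega\rangle$,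 $\|A\|_2=\mathbb E[A^*A]^{1/2}$. For a subdivision $\mathcal I=\{[a_i,a_{i+1})\}_{i=1}^N$ of $[0,t)$, $\delta(\mathcal I)=\max_i(a_{i+1}-a_i)$, $X_i=X(a_{i+1})-X(a_i)$, and $\psi_m(t;\mathcal I)=\sum X_{u(1)}\cdots X_{u(m)}$ over all $m$-tuples of pairwise distinct indices $u(j)\in\{1,\dots,N\}$. Let $[0]_q=0$, $[n]_q=1+q+\dots+q^{n-1}$. The polynomials $C_{q,m}(x,t)$ (scaled centered continuous big $q$-Hermite polynomials) are defined by $C_{q,0}=1$, $C_{q,-1}=0$ and $xC_{q,m}(x,t)=C_{q,m+1}(x,t)+[m]_qC_{q,m}(x,t)+t[m]_qC_{q,m-1}(x,t)$. *)

theory Defs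
  imports "HOL-Analysis.Analysis" "HOL-Combinatorics.Permutations"
          "HOL-Computational_Algebra.Polynomial"
begin

text \<open>Vectors of the algebraic q-Fock space over L2(R+) are represented as finite
  formal linear combinations of simple tensors f1 (x) ... (x) fk: a list of pairs
  (coefficient, [f1,...,fk]); the empty tensor list is the vacuum.\<close>

type_synonym fn = "real \<Rightarrow> real"
type_synonym fvec = "(real \<times> fn list) list"

definition Omega :: fvec where "Omega = [(1, [])]"

definition vscale :: "real \<Rightarrow> fvec \<Rightarrow> fvec" where
  "vscale c v = map (\<lambda>(d, gs). (c * d, gs)) v"

definition vadd :: "fvec \<Rightarrow> fvec \<Rightarrow> fvec" where
  "vadd v w = v @ w"

definition vsub :: "fvec \<Rightarrow> fvec \<Rightarrow> fvec" where
  "vsub v w = v @ vscale (-1) w"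

definition l2inner :: "fn \<Rightarrow> fn \<Rightarrow> real" where
  "l2inner f g = (LINT x:{0..}|lborel. f x * g x)"

definition inversions_of :: "nat \<Rightarrow> (nat \<Rightarrow> nat) \<Rightarrow> nat" where
  "inversions_of n \<sigma> = card {(i, j). i < j \<and> j < n \<and> \<sigma> j < \<sigma> i}"

definition qip :: "real \<Rightarrow> fn list \<Rightarrow> fn list \<Rightarrow> real" where
  "qip q fs gs = (if length fs = length gs then
     (\<Sum>\<sigma>\<in>{\<sigma>. \<sigma> permutes {..<length gs}}.
        q ^ inversions_of (length gs) \<sigma> * (\<Prod>j<length gs. l2inner (fs ! j) (gs ! (\<sigma> j))))
   else 0)"

definition vinner :: "real \<Rightarrow> fvec \<Rightarrow> fvec \<Rightarrow> real" where
  "vinner q v w = sum_list (map (\<lambda>(c, gs). sum_list (map (\<lambda>(d, hs). c * d * qip q gs hs) w)) v)"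

definition vnorm :: "real \<Rightarrow> fvec \<Rightarrow> real" where
  "vnorm q v = sqrt (vinner q v v)"

definition op_lin :: "(fn list \<Rightarrow> fvec) \<Rightarrow> fvec \<Rightarrow> fvec" where
  "op_lin T v = concat (map (\<lambda>(c, gs). vscale c (T gs)) v)"

definition acre :: "fn \<Rightarrow> fn list \<Rightarrow> fvec" where
  "acre f gs = [(1, f # gs)]"

definition aann :: "real \<Rightarrow> fn \<Rightarrow> fn list \<Rightarrow> fvec" where
  "aann q f gs = map (\<lambda>k. (q ^ k * l2inner f (gs ! k), take k gs @ drop (Suc k) gs))
                     [0..<length gs]"

definition pop :: "real \<Rightarrow> fn \<Rightarrow> fn list \<Rightarrow> fvec" where
  "pop q f gs = map (\<lambda>k. (q ^ k, (\<lambda>x. f x * (gs ! k) x) # (take k gs @ drop (Suc k) gs)))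
                    [0..<length gs]"

text \<open>Centered q-Poisson process X(t) = a*(1_[0,t)) + a(1_[0,t)) + p(1_[0,t)).\<close>
definition Xop :: "real \<Rightarrow> real \<Rightarrow> fvec \<Rightarrow> fvec" where
  "Xop q t = op_lin (\<lambda>gs. acre (indicator {0..<t}) gs @ aann q (indicator {0..<t}) gs
                          @ pop q (indicator {0..<t}) gs)"

definition is_subdiv :: "real \<Rightarrow> real list \<Rightarrow> bool" where
  "is_subdiv t as \<longleftrightarrow> 2 \<le> length as \<and> sorted_wrt (<) as \<and> hd as = 0 \<and> last as = t"

definition mesh :: "real list \<Rightarrow> real" where
  "mesh as = Max (set (map (\<lambda>(a, b). b - a) (zip as (tl as))))"

text \<open>psi_m(t; I) applied to the vacuum.\<close>
definition psi_vec :: "real \<Rightarrow> nat \<Rightarrow> real list \<Rightarrow> fvec" where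
  "psi_vec q m as =
     (let N = length as - 1;
          Xi = (\<lambda>i v. vsub (Xop q (as ! Suc i) v) (Xop q (as ! i) v))
      in concat (map (\<lambda>u. foldr Xi u Omega) (filter distinct (List.n_lists m [0..<N]))))"

definition qnum :: "real \<Rightarrow> nat \<Rightarrow> real" where
  "qnum q n = (\<Sum>i<n. q ^ i)"

text \<open>C_{q,m}(x,t) as a polynomial in x; C_{-1} = 0, C_0 = 1,
  C_{m+1} = x C_m - [m]_q C_m - t [m]_q C_{m-1}.\<close>
fun Cq :: "real \<Rightarrow> real \<Rightarrow> nat \<Rightarrow> real poly" where
  "Cq q t 0 = 1"
| "Cq q t (Suc 0) = [:0, 1:] * 1 - smult (qnum q 0) 1 - smult (t * qnum q 0) 0"
| "Cq q t (Suc (Suc m)) = [:0, 1:] * Cq q t (Suc m) - smult (qnum q (Suc m)) (Cq q t (Suc m))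
       - smult (t * qnum q (Suc m)) (Cq q t m)"

definition opoly :: "real poly \<Rightarrow> (fvec \<Rightarrow> fvec) \<Rightarrow> fvec \<Rightarrow> fvec" where
  "opoly p A v = concat (map (\<lambda>i. vscale (coeff p i) ((A ^^ i) v)) [0..<Suc (degree p)])"

end

theory Submission
  imports Defs
begin

text \<open>
  Fix a subdivision 0 = a_0 < ... < a_N = t with cells I_i = [a_i, a_(i+1)) of widths w_i.
  All functions that occur are step functions for it, so every vector that occurs is determined
  by its coefficient arrays c_k(u), u in {0..N-1}^k, with respect to the simple tensors
  1_(I_u1) (x) ... (x) 1_(I_uk), and in these coordinates the q-inner product is
  sum_k sum_sigma q^inv(sigma) sum_u w_u1 ... w_uk c_k(u) c'_k(u o sigma^-1).
  The increment X_i acts on a tensor of indicators of cells different from I_i by creation only,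
  so psi_m(t; I) Omega has coefficient 1 exactly on the injective multi-indices of length m.
  The recursion of C_(q,m) is exactly the action of X(t) on 1_[0,t)^(x)m, so C_(q,m)(X(t)) Omega
  has coefficient 1 on all multi-indices of length m. The difference is carried by the
  non-injective multi-indices, whose total weight is at most m^2 * mesh * t^(m-1); with |q| <= 1
  the squared norm is at most m! m^2 t^(m-1) mesh.
\<close>

lemma sum_list_map_upt: "sum_list (map f [0..<n]) = (\<Sum>i<n. f i)"
  by (simp add: sum_set_upt_conv_sum_list_nat[symmetric] atLeast0LessThan)

lemma nth_take_drop_Suc:
  "j < length xs - 1 \<Longrightarrow> (take p xs @ drop (Suc p) xs) ! j = xs ! (if j < p then j else Suc j)"
  by (auto simp: nth_append min_def)

definition insert_at :: "nat \<Rightarrow> 'a \<Rightarrow> (nat \<Rightarrow> 'a) \<Rightarrow> nat \<Rightarrow> 'a" where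
  "insert_at p x u j = (if j < p then u j else if j = p then x else u (j - 1))"

lemma prod_insert_at:
  fixes F :: "nat \<Rightarrow> 'a \<Rightarrow> 'b::comm_monoid_mult"
  assumes "p \<le> k"
  shows "(\<Prod>j<Suc k. F j (insert_at p x u j)) = F p x * (\<Prod>j<k. F (if j < p then j else Suc j) (u j))"
proof -
  have "(\<Prod>j<Suc k. F j (insert_at p x u j)) = F p x * (\<Prod>j\<in>{..<Suc k} - {p}. F j (insert_at p x u j))"
    using assms by (subst prod.remove[of _ p]) (auto simp: insert_at_def)
  also have "(\<Prod>j\<in>{..<Suc k} - {p}. F j (insert_at p x u j)) = (\<Prod>j<k. F (if j < p then j else Suc j) (u j))"
    by (rule prod.reindex_bij_witness[of _ "\<lambda>j. if j < p then j else Suc j" "\<lambda>j. if j < p then j else j - 1"])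
       (use assms in \<open>auto simp: insert_at_def split: if_splits\<close>)
  finally show ?thesis .
qed

lemma prod_permutes_inv:
  assumes "\<sigma> permutes {..<k}"
  shows "(\<Prod>j<k. F (\<sigma> j) (u j)) = (\<Prod>l<k. F l (u (inv \<sigma> l)))"
  using prod.permute[OF assms, of "\<lambda>l. F l (u (inv \<sigma> l))"] permutes_inverses(2)[OF assms]
  by simp

definition field_op :: "real \<Rightarrow> fn \<Rightarrow> fvec \<Rightarrow> fvec" where
  "field_op q f = op_lin (\<lambda>gs. acre f gs @ aann q f gs @ pop q f gs)"

lemma Xop_eq_field_op: "Xop q t = field_op q (indicator {0..<t})"
  by (simp add: Xop_def field_op_def)

lemma prod_if_two_points:
  assumes "finite A" "a \<in> A" "b \<in> A" "a \<noteq> b"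
  shows "(\<Prod>j\<in>A. if j = a \<or> j = b then g j else h j) = g a * g b * (\<Prod>j\<in>A - {a, b}. h j)"
proof -
  have "A \<inter> {j. j = a \<or> j = b} = {a, b}" "A \<inter> - {j. j = a \<or> j = b} = A - {a, b}"
    using assms by auto
  then show ?thesis
    using assms by (simp add: prod.If_cases)
qed

lemma sqrt_less_of_le_mult:
  fixes x C h e :: real
  assumes "0 \<le> C" "0 < e" "x \<le> C * h" "h < e\<^sup>2 / (C + 1)"
  shows "sqrt x < e"
proof -
  have "x \<le> C * (e\<^sup>2 / (C + 1))"
    using assms by (meson less_imp_le mult_left_mono order_trans)
  also have "\<dots> < e\<^sup>2"
    using assms(1,2) by (simp add: field_simps)
  finally show ?thesis
    using assms(2) real_sqrt_less_iff[of x "e\<^sup>2"] by simp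
qed

section \<open>Step functions of a subdivision\<close>

locale subdivision =
  fixes t :: real and as :: "real list"
  assumes is_subdiv: "is_subdiv t as"
begin

definition N :: nat where "N = length as - 1"

lemma nodes_sorted: "sorted_wrt (<) as" and length_eq_Suc_N: "length as = Suc N" and N_pos: "0 < N"
  using is_subdiv by (auto simp: is_subdiv_def N_def)

lemma first_node: "as ! 0 = 0" and last_node: "as ! N = t"
proof -
  have "as \<noteq> []" using length_eq_Suc_N by auto
  with is_subdiv show "as ! 0 = 0" "as ! N = t"
    by (auto simp: is_subdiv_def hd_conv_nth last_conv_nth N_def)
qed

abbreviation cell :: "nat \<Rightarrow> real set" where "cell i \<equiv> {as ! i..<as ! Suc i}"

definition width :: "nat \<Rightarrow> real" where "width i = as ! Suc i - as ! i"

lemma node_less: "i < j \<Longrightarrow> j \<le> N \<Longrightarrow> as ! i < as ! j"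
  using sorted_wrt_nth_less[OF nodes_sorted, of i j] by (simp add: length_eq_Suc_N)

lemma node_le: "i \<le> j \<Longrightarrow> j \<le> N \<Longrightarrow> as ! i \<le> as ! j"
  using node_less[of i j] by (cases "i = j") auto

lemma node_nonneg: "i \<le> N \<Longrightarrow> 0 \<le> as ! i"
  using node_le[of 0 i] first_node by auto

lemma width_nonneg: "i < N \<Longrightarrow> 0 \<le> width i"
  using node_le[of i "Suc i"] by (auto simp: width_def)

lemma t_nonneg: "0 \<le> t"
  by (simp add: last_node[symmetric] node_nonneg)

lemma sum_width: "(\<Sum>i<N. width i) = t"
  unfolding width_def last_node[symmetric] using sum_lessThan_telescope[of "\<lambda>i. as ! i" N] first_node by simp

lemma width_le_mesh: "i < N \<Longrightarrow> width i \<le> mesh as"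
proof -
  assume i: "i < N"
  then have "zip as (tl as) ! i = (as ! i, as ! Suc i)" "i < length (zip as (tl as))"
    by (simp_all add: nth_tl N_def)
  then have "(as ! i, as ! Suc i) \<in> set (zip as (tl as))"
    by (metis nth_mem)
  then have "width i \<in> set (map (\<lambda>(a, b). b - a) (zip as (tl as)))"
    unfolding width_def by force
  then show ?thesis unfolding mesh_def by (intro Max_ge) auto
qed

lemma mesh_nonneg: "0 \<le> mesh as"
  using width_le_mesh[OF N_pos] width_nonneg[OF N_pos] by simp

lemma indicator_cell_mult:
  assumes "i < N" "j < N"
  shows "indicator (cell i) x * indicator (cell j) x = (if i = j then indicator (cell i) x else (0::real))"
proof (cases i j rule: linorder_cases)
  case less
  then have "as ! Suc i \<le> as ! j" using node_le[of "Suc i" j] assms by auto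
  then show ?thesis using less by (auto simp: indicator_def)
next
  case greater
  then have "as ! Suc j \<le> as ! i" using node_le[of "Suc j" i] assms by auto
  then show ?thesis using greater by (auto simp: indicator_def)
qed (auto simp: indicator_def)

lemma sum_indicator_cells:
  "K \<le> N \<Longrightarrow> (\<Sum>i<K. indicator (cell i) x) = (indicator {0..<as ! K} x :: real)"
proof (induction K)
  case 0
  then show ?case using first_node by (auto simp: indicator_def)
next
  case (Suc K)
  have "0 \<le> as ! K" "as ! K \<le> as ! Suc K" using node_nonneg[of K] node_le[of K "Suc K"] Suc.prems by auto
  then show ?case using Suc by (auto simp: indicator_def)
qed

lemma indicator_initial_at_node:
  "K \<le> N \<Longrightarrow> i < N \<Longrightarrow> indicator {0..<as ! K} (as ! i) = (if i < K then 1 else (0::real))"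
  using node_nonneg[of i] node_less[of i K] node_le[of K i] by (auto simp: indicator_def)

definition step_fun :: "fn \<Rightarrow> bool" where
  "step_fun f \<longleftrightarrow> (\<forall>x. f x = (\<Sum>i<N. f (as ! i) * indicator (cell i) x))"

lemma step_fun_indicator_initial:
  assumes "K \<le> N"
  shows "step_fun (indicator {0..<as ! K})"
  unfolding step_fun_def
proof
  fix x
  have "(\<Sum>i<N. indicator {0..<as ! K} (as ! i) * indicator (cell i) x)
      = (\<Sum>i<N. if i < K then indicator (cell i) x else (0::real))"
    using indicator_initial_at_node[OF assms] by (intro sum.cong) auto
  also have "\<dots> = (\<Sum>i<K. indicator (cell i) x)"
    using assms by (intro sum.mono_neutral_cong_right) auto
  finally show "(indicator {0..<as ! K} x :: real) = (\<Sum>i<N. indicator {0..<as ! K} (as ! i) * indicator (cell i) x)"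
    using sum_indicator_cells[OF assms, of x] by linarith
qed

lemma step_fun_mult_eq:
  assumes "step_fun f" "step_fun g"
  shows "f x * g x = (\<Sum>i<N. f (as ! i) * g (as ! i) * indicator (cell i) x)"
proof -
  have "f x * g x = (\<Sum>i<N. f (as ! i) * indicator (cell i) x) * (\<Sum>j<N. g (as ! j) * indicator (cell j) x)"
    using assms unfolding step_fun_def by metis
  also have "\<dots> = (\<Sum>i<N. \<Sum>j<N. f (as ! i) * g (as ! j) * (indicator (cell i) x * indicator (cell j) x))"
    unfolding sum_product by (intro sum.cong refl) (simp add: mult_ac)
  also have "\<dots> = (\<Sum>i<N. \<Sum>j<N. if j = i then f (as ! i) * g (as ! i) * indicator (cell i) x else 0)"
    by (intro sum.cong refl) (auto simp: indicator_cell_mult)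
  finally show ?thesis by simp
qed

lemma step_fun_mult: "step_fun f \<Longrightarrow> step_fun g \<Longrightarrow> step_fun (\<lambda>x. f x * g x)"
  unfolding step_fun_def[of "\<lambda>x. f x * g x"] using step_fun_mult_eq by blast

lemma l2inner_step_fun:
  assumes "step_fun f" "step_fun g"
  shows "l2inner f g = (\<Sum>i<N. f (as ! i) * g (as ! i) * width i)"
proof -
  have "indicator {0..} x *\<^sub>R (f x * g x) = (\<Sum>i<N. f (as ! i) * g (as ! i) * indicator (cell i) x)" for x
  proof -
    have "indicator {0..} x * indicator (cell i) x = (indicator (cell i) x :: real)" if "i < N" for i
      using node_nonneg[of i] that by (auto simp: indicator_def)
    then show ?thesis
      unfolding step_fun_mult_eq[OF assms, of x] real_scaleR_def sum_distrib_left
      by (intro sum.cong refl) (simp add: mult.left_commute)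
  qed
  then have "l2inner f g = integral\<^sup>L lborel (\<lambda>x. \<Sum>i<N. f (as ! i) * g (as ! i) * indicator (cell i) x)"
    unfolding l2inner_def set_lebesgue_integral_def by (simp only:)
  also have "\<dots> = (\<Sum>i<N. integral\<^sup>L lborel (\<lambda>x. f (as ! i) * g (as ! i) * indicator (cell i) x))"
    using node_le[of _ "Suc _"]
    by (intro Bochner_Integration.integral_sum integrable_mult_right) (simp add: integrable_indicator_iff)
  also have "\<dots> = (\<Sum>i<N. f (as ! i) * g (as ! i) * width i)"
    using node_le[of _ "Suc _"] by (intro sum.cong refl) (simp add: integral_indicator width_def)
  finally show ?thesis .
qed

section \<open>Coefficient arrays\<close>

type_synonym coeffs = "nat \<Rightarrow> (nat \<Rightarrow> nat) \<Rightarrow> real"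

(* A tensor g_1 (x) ... (x) g_k of step functions is the sum over u of
   tensor_coeff gs k u * 1_(I_u0) (x) ... (x) 1_(I_u(k-1)). *)
definition tensor_coeff :: "fn list \<Rightarrow> coeffs" where
  "tensor_coeff gs k u = (if length gs = k then (\<Prod>j<k. (gs ! j) (as ! u j)) else 0)"

definition vec_coeff :: "fvec \<Rightarrow> coeffs" where
  "vec_coeff v k u = sum_list (map (\<lambda>(c, gs). c * tensor_coeff gs k u) v)"

definition step_vec :: "fvec \<Rightarrow> bool" where
  "step_vec v \<longleftrightarrow> (\<forall>(c, gs)\<in>set v. \<forall>g\<in>set gs. step_fun g)"

lemma vec_coeff_append [simp]: "vec_coeff (v @ v') k u = vec_coeff v k u + vec_coeff v' k u"
  by (simp add: vec_coeff_def)

lemma vec_coeff_vscale [simp]: "vec_coeff (vscale c v) k u = c * vec_coeff v k u"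
  by (induction v) (auto simp: vec_coeff_def vscale_def algebra_simps)

lemma vec_coeff_vsub [simp]: "vec_coeff (vsub v v') k u = vec_coeff v k u - vec_coeff v' k u"
  by (simp add: vsub_def)

lemma vec_coeff_concat: "vec_coeff (concat vs) k u = sum_list (map (\<lambda>v. vec_coeff v k u) vs)"
  by (induction vs) (auto simp: vec_coeff_def)

lemma vec_coeff_Omega: "vec_coeff Omega k u = (if k = 0 then 1 else 0)"
  by (simp add: vec_coeff_def Omega_def tensor_coeff_def)

lemma vec_coeff_conv_sum: "vec_coeff v k u = (\<Sum>a<length v. fst (v ! a) * tensor_coeff (snd (v ! a)) k u)"
  unfolding vec_coeff_def sum_list_sum_nth by (simp add: case_prod_beta atLeast0LessThan)

lemma tensor_coeff_Cons:
  "tensor_coeff (f # gs) k u = (if k = 0 then 0 else f (as ! u 0) * tensor_coeff gs (k - 1) (\<lambda>j. u (Suc j)))"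
  by (cases k) (simp_all add: tensor_coeff_def prod.lessThan_Suc_shift del: prod.lessThan_Suc)

lemma tensor_coeff_insert_at:
  assumes "length gs = Suc k" "p \<le> k"
  shows "tensor_coeff gs (Suc k) (insert_at p i u) = (gs ! p) (as ! i) * tensor_coeff (take p gs @ drop (Suc p) gs) k u"
  using assms prod_insert_at[OF assms(2), of "\<lambda>j x. (gs ! j) (as ! x)"]
  by (simp add: tensor_coeff_def nth_take_drop_Suc)

(* The coefficients of (a*(f) + a(f) + p(f)) v in terms of those of v: creation, annihilation
   and preservation terms. *)
definition field_coeff :: "real \<Rightarrow> fn \<Rightarrow> coeffs \<Rightarrow> coeffs" where
  "field_coeff q f F k u =
     (if k = 0 then 0 else f (as ! u 0) * F (k - 1) (\<lambda>j. u (Suc j)))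
     + (\<Sum>p<Suc k. q ^ p * (\<Sum>i<N. f (as ! i) * width i * F (Suc k) (insert_at p i u)))
     + (\<Sum>p<k. q ^ p * f (as ! u 0) * F k (insert_at p (u 0) (\<lambda>j. u (Suc j))))"

lemma vec_coeff_acre:
  "vec_coeff (acre f gs) k u = (if k = 0 then 0 else f (as ! u 0) * tensor_coeff gs (k - 1) (\<lambda>j. u (Suc j)))"
  by (simp add: acre_def vec_coeff_def tensor_coeff_Cons)

lemma vec_coeff_aann:
  assumes "step_fun f" "\<forall>g\<in>set gs. step_fun g"
  shows "vec_coeff (aann q f gs) k u
    = (\<Sum>p<Suc k. q ^ p * (\<Sum>i<N. f (as ! i) * width i * tensor_coeff gs (Suc k) (insert_at p i u)))"
proof (cases "length gs = Suc k")
  case True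
  have "vec_coeff (aann q f gs) k u
      = (\<Sum>p<Suc k. q ^ p * l2inner f (gs ! p) * tensor_coeff (take p gs @ drop (Suc p) gs) k u)"
    using True by (simp add: aann_def vec_coeff_def comp_def sum_list_map_upt)
  also have "\<dots> = (\<Sum>p<Suc k. q ^ p * (\<Sum>i<N. f (as ! i) * width i * tensor_coeff gs (Suc k) (insert_at p i u)))"
    using True assms
    by (intro sum.cong refl)
       (simp add: l2inner_step_fun tensor_coeff_insert_at sum_distrib_left sum_distrib_right mult_ac)
  finally show ?thesis .
next
  case False
  then have "tensor_coeff (take p gs @ drop (Suc p) gs) k u = 0" if "p < length gs" for p
    using that by (auto simp: tensor_coeff_def)
  moreover have "tensor_coeff gs (Suc k) v = 0" for v
    using False by (simp add: tensor_coeff_def)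
  ultimately show ?thesis by (simp add: aann_def vec_coeff_def comp_def sum_list_map_upt)
qed

lemma vec_coeff_pop:
  "vec_coeff (pop q f gs) k u = (\<Sum>p<k. q ^ p * f (as ! u 0) * tensor_coeff gs k (insert_at p (u 0) (\<lambda>j. u (Suc j))))"
proof (cases "length gs = k")
  case True
  show ?thesis
  proof (cases k)
    case (Suc k')
    have "vec_coeff (pop q f gs) k u
        = (\<Sum>p<k. q ^ p * tensor_coeff ((\<lambda>x. f x * (gs ! p) x) # (take p gs @ drop (Suc p) gs)) k u)"
      using True by (simp add: pop_def vec_coeff_def comp_def sum_list_map_upt)
    also have "\<dots> = (\<Sum>p<k. q ^ p * f (as ! u 0) * tensor_coeff gs k (insert_at p (u 0) (\<lambda>j. u (Suc j))))"
      using True Suc by (intro sum.cong refl) (simp add: tensor_coeff_Cons tensor_coeff_insert_at)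
    finally show ?thesis .
  qed (use True in \<open>simp add: pop_def vec_coeff_def\<close>)
next
  case False
  then have "tensor_coeff (g # take p gs @ drop (Suc p) gs) k u = 0" if "p < length gs" for g p
    using that by (auto simp: tensor_coeff_def)
  moreover have "tensor_coeff gs k v = 0" for v
    using False by (simp add: tensor_coeff_def)
  ultimately show ?thesis by (simp add: pop_def vec_coeff_def comp_def sum_list_map_upt)
qed

lemma field_coeff_add:
  "field_coeff q f (\<lambda>k u. F k u + G k u) k u = field_coeff q f F k u + field_coeff q f G k u"
  by (simp add: field_coeff_def algebra_simps sum.distrib)

lemma field_coeff_scale: "field_coeff q f (\<lambda>k u. c * F k u) k u = c * field_coeff q f F k u"
  by (simp add: field_coeff_def algebra_simps sum_distrib_left)

lemma field_coeff_sum: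
  assumes "finite S"
  shows "field_coeff q f (\<lambda>k u. \<Sum>x\<in>S. c x * F x k u) k u = (\<Sum>x\<in>S. c x * field_coeff q f (F x) k u)"
  using assms
proof (induction S arbitrary: k u rule: finite_induct)
  case empty
  then show ?case by (simp add: field_coeff_def)
next
  case (insert x S)
  then have "(\<lambda>k u. \<Sum>x\<in>insert x S. c x * F x k u) = (\<lambda>k u. c x * F x k u + (\<Sum>x\<in>S. c x * F x k u))"
    by simp
  with insert show ?case by (simp add: field_coeff_add field_coeff_scale)
qed

lemma vec_coeff_field_op:
  assumes "step_fun f" "step_vec v"
  shows "vec_coeff (field_op q f v) k u = field_coeff q f (vec_coeff v) k u"
proof -
  have "vec_coeff (field_op q f v) k u
      = (\<Sum>a<length v. fst (v ! a) * field_coeff q f (tensor_coeff (snd (v ! a))) k u)"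
  proof -
    have "vec_coeff (acre f gs @ aann q f gs @ pop q f gs) k u = field_coeff q f (tensor_coeff gs) k u"
      if "gs = snd (v ! a)" "a < length v" for gs a
    proof -
      have "(fst (v ! a), gs) \<in> set v"
        using that by simp
      then have "\<forall>g\<in>set gs. step_fun g"
        using assms(2) by (auto simp: step_vec_def)
      with assms(1) show ?thesis
        by (simp add: vec_coeff_acre vec_coeff_aann vec_coeff_pop field_coeff_def)
    qed
    then show ?thesis
      unfolding field_op_def op_lin_def vec_coeff_concat sum_list_sum_nth
      by (intro sum.cong) (auto simp: atLeast0LessThan case_prod_beta simp del: vec_coeff_append)
  qed
  also have "\<dots> = field_coeff q f (vec_coeff v) k u"
    unfolding vec_coeff_conv_sum by (rule field_coeff_sum[symmetric]) simp
  finally show ?thesis .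
qed

lemma step_vec_field_op:
  assumes "step_fun f" "step_vec v"
  shows "step_vec (field_op q f v)"
proof -
  have "\<forall>g\<in>set gs. step_fun g" if "(c, gs) \<in> set v" for c gs
    using assms(2) that by (auto simp: step_vec_def)
  then show ?thesis using assms(1)
    by (fastforce simp: step_vec_def field_op_def op_lin_def vscale_def acre_def aann_def pop_def
        intro: step_fun_mult dest: in_set_takeD in_set_dropD)
qed

lemma step_vec_vsub: "step_vec v \<Longrightarrow> step_vec v' \<Longrightarrow> step_vec (vsub v v')"
  by (auto simp: step_vec_def vsub_def vscale_def)

lemma step_vec_Omega: "step_vec Omega"
  by (simp add: step_vec_def Omega_def)

lemma step_vec_concat: "(\<And>v. v \<in> set vs \<Longrightarrow> step_vec v) \<Longrightarrow> step_vec (concat vs)"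
  by (auto simp: step_vec_def)

lemma step_vec_vscale: "step_vec v \<Longrightarrow> step_vec (vscale c v)"
  by (auto simp: step_vec_def vscale_def)

(* Entries u j >= N do not index cells (and as ! u j is a junk value beyond N), so identities
   between coefficient arrays are only claimed on cell indices. *)
definition cell_indices :: "nat \<Rightarrow> (nat \<Rightarrow> nat) \<Rightarrow> bool" where
  "cell_indices k u \<longleftrightarrow> (\<forall>j<k. u j < N)"

lemma field_coeff_cong:
  assumes "\<And>k u. cell_indices k u \<Longrightarrow> F k u = G k u" "cell_indices k u"
  shows "field_coeff q f F k u = field_coeff q f G k u"
proof -
  have "cell_indices (k - 1) (\<lambda>j. u (Suc j))" "cell_indices k (insert_at p (u 0) (\<lambda>j. u (Suc j)))"
    if "0 < k" "p < k" for p
    using assms(2) that unfolding cell_indices_def insert_at_def by auto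
  moreover have "cell_indices (Suc k) (insert_at p i u)" if "i < N" "p \<le> k" for p i
    using assms(2) that unfolding cell_indices_def insert_at_def by auto
  ultimately show ?thesis
    unfolding field_coeff_def using assms(1) by (intro arg_cong2[where f = "(+)"] sum.cong refl) simp_all
qed

lemma field_coeff_diff: "field_coeff q f F k u - field_coeff q g F k u = field_coeff q (\<lambda>x. f x - g x) F k u"
  by (cases k) (simp_all add: field_coeff_def left_diff_distrib right_diff_distrib sum_subtractf)

(* The coefficient array of 1_(I_s0) (x) ... (x) 1_(I_s(k-1)). *)
definition basis_coeff :: "nat list \<Rightarrow> coeffs" where
  "basis_coeff s k u = (if k = length s \<and> (\<forall>j<k. u j = s ! j) then 1 else 0)"

lemma field_coeff_basis_coeff:
  assumes i: "i < N" "i \<notin> set s" and e: "\<And>j. j < N \<Longrightarrow> e (as ! j) = (if j = i then 1 else 0)"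
    and u: "cell_indices k u"
  shows "field_coeff q e (basis_coeff s) k u = basis_coeff (i # s) k u"
proof -
  txt \<open>Annihilation and preservation would need the cell i to occur in s.\<close>
  have annihilation: "e (as ! j) * width j * basis_coeff s (Suc k) (insert_at p j u) = 0" if "j < N" "p \<le> k" for j p
  proof (cases "j = i")
    case True
    have "\<not> (\<forall>j<Suc k. insert_at p i u j = s ! j)" if "Suc k = length s"
    proof
      assume "\<forall>j<Suc k. insert_at p i u j = s ! j"
      then have "insert_at p i u p = s ! p" using \<open>p \<le> k\<close> by simp
      then have "i = s ! p" by (simp add: insert_at_def)
      then show False using i(2) that \<open>p \<le> k\<close> by auto
    qed
    then have "basis_coeff s (Suc k) (insert_at p i u) = 0"
      by (auto simp: basis_coeff_def)
    then show ?thesis using True by simp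
  qed (use e that in auto)
  have preservation: "q ^ p * e (as ! u 0) * basis_coeff s k (insert_at p (u 0) (\<lambda>j. u (Suc j))) = 0"
    if "p < k" for p
  proof (cases "u 0 = i")
    case True
    then show ?thesis using that i by (auto simp: basis_coeff_def insert_at_def)
  next
    case False
    then show ?thesis using u that e by (auto simp: cell_indices_def)
  qed
  have creation: "(if k = 0 then 0 else e (as ! u 0) * basis_coeff s (k - 1) (\<lambda>j. u (Suc j))) = basis_coeff (i # s) k u"
    using u e by (cases k) (auto simp: basis_coeff_def cell_indices_def All_less_Suc2)
  have "(\<Sum>p<Suc k. q ^ p * (\<Sum>j<N. e (as ! j) * width j * basis_coeff s (Suc k) (insert_at p j u))) = 0"
    by (intro sum.neutral ballI) (simp add: annihilation sum.neutral less_Suc_eq_le)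
  moreover have "(\<Sum>p<k. q ^ p * e (as ! u 0) * basis_coeff s k (insert_at p (u 0) (\<lambda>j. u (Suc j)))) = 0"
    by (intro sum.neutral ballI) (simp add: preservation)
  ultimately show ?thesis
    unfolding field_coeff_def creation by simp
qed

section \<open>The increments and psi_m\<close>

definition increment :: "real \<Rightarrow> nat \<Rightarrow> fvec \<Rightarrow> fvec" where
  "increment q i v = vsub (Xop q (as ! Suc i) v) (Xop q (as ! i) v)"

lemma step_vec_increments:
  "set s \<subseteq> {..<N} \<Longrightarrow> step_vec (foldr (increment q) s Omega)"
  by (induction s)
     (simp_all add: step_vec_Omega increment_def Xop_eq_field_op step_vec_vsub step_vec_field_op
       step_fun_indicator_initial)

lemma vec_coeff_increments:
  assumes "distinct s" "set s \<subseteq> {..<N}" "cell_indices k u"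
  shows "vec_coeff (foldr (increment q) s Omega) k u = basis_coeff s k u"
  using assms
proof (induction s arbitrary: k u)
  case Nil
  then show ?case by (simp add: vec_coeff_Omega basis_coeff_def)
next
  case (Cons i s)
  define v where "v = foldr (increment q) s Omega"
  have i: "i < N" "i \<notin> set s" using Cons.prems by auto
  have v: "step_vec v" using Cons.prems step_vec_increments by (simp add: v_def)
  have "vec_coeff (increment q i v) k u
      = field_coeff q (\<lambda>x. indicator {0..<as ! Suc i} x - indicator {0..<as ! i} x) (vec_coeff v) k u"
    using i v
    by (simp add: increment_def Xop_eq_field_op vec_coeff_field_op step_fun_indicator_initial field_coeff_diff)
  also have "\<dots> = field_coeff q (\<lambda>x. indicator {0..<as ! Suc i} x - indicator {0..<as ! i} x) (basis_coeff s) k u"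
    using Cons by (intro field_coeff_cong) (auto simp: v_def)
  also have "\<dots> = basis_coeff (i # s) k u"
    using i Cons.prems by (intro field_coeff_basis_coeff) (auto simp: indicator_initial_at_node)
  finally show ?case by (simp add: v_def)
qed

lemma psi_vec_eq_increments:
  "psi_vec q m as = concat (map (\<lambda>s. foldr (increment q) s Omega) (filter distinct (List.n_lists m [0..<N])))"
  unfolding psi_vec_def increment_def[abs_def] Let_def N_def ..

lemma vec_coeff_psi_vec:
  assumes "cell_indices k u"
  shows "vec_coeff (psi_vec q m as) k u = (if k = m \<and> inj_on u {..<m} then 1 else 0)"
proof -
  define L where "L = filter distinct (List.n_lists m [0..<N])"
  have L: "distinct L" "set L = {s. distinct s \<and> length s = m \<and> set s \<subseteq> {..<N}}"
    unfolding L_def by (auto simp: set_n_lists distinct_n_lists)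
  have "vec_coeff (psi_vec q m as) k u = (\<Sum>s\<in>set L. vec_coeff (foldr (increment q) s Omega) k u)"
    unfolding psi_vec_eq_increments vec_coeff_concat L_def[symmetric]
    using L(1) by (simp add: comp_def sum_list_distinct_conv_sum_set)
  also have "\<dots> = (\<Sum>s\<in>set L. basis_coeff s k u)"
    using assms by (intro sum.cong refl) (simp add: L vec_coeff_increments)
  also have "\<dots> = (\<Sum>s\<in>set L. if k = m \<and> s = map u [0..<m] then 1 else 0)"
    by (intro sum.cong refl) (auto simp: L basis_coeff_def list_eq_iff_nth_eq)
  also have "\<dots> = (if k = m \<and> map u [0..<m] \<in> set L then 1 else 0)"
    by (cases "k = m") simp_all
  also have "\<dots> = (if k = m \<and> inj_on u {..<m} then 1 else 0)"
    using assms by (auto simp: L distinct_map cell_indices_def atLeast0LessThan)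
  finally show ?thesis .
qed

lemma step_vec_psi_vec: "step_vec (psi_vec q m as)"
  unfolding psi_vec_eq_increments
  by (intro step_vec_concat) (auto simp: set_n_lists atLeast0LessThan intro: step_vec_increments)

section \<open>Polynomials in X(t)\<close>

definition opoly_coeff :: "real \<Rightarrow> real poly \<Rightarrow> coeffs" where
  "opoly_coeff q p k u = (\<Sum>i<Suc (degree p). coeff p i * vec_coeff ((Xop q t ^^ i) Omega) k u)"

lemma step_fun_indicator_whole: "step_fun (indicator {0..<t})"
  unfolding last_node[symmetric] by (rule step_fun_indicator_initial) simp

lemma step_vec_Xop_power: "step_vec ((Xop q t ^^ i) Omega)"
  by (induction i) (simp_all add: step_vec_Omega Xop_eq_field_op step_vec_field_op step_fun_indicator_whole)

lemma vec_coeff_Xop_power_Suc: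
  "vec_coeff ((Xop q t ^^ Suc i) Omega) k u
    = field_coeff q (indicator {0..<t}) (vec_coeff ((Xop q t ^^ i) Omega)) k u"
  unfolding funpow.simps comp_def Xop_eq_field_op
  by (rule vec_coeff_field_op[OF step_fun_indicator_whole step_vec_Xop_power[unfolded Xop_eq_field_op]])

lemma vec_coeff_opoly: "vec_coeff (opoly p (Xop q t) Omega) k u = opoly_coeff q p k u"
  unfolding opoly_def vec_coeff_concat opoly_coeff_def by (simp add: comp_def sum_list_map_upt)

lemma step_vec_opoly: "step_vec (opoly p (Xop q t) Omega)"
  unfolding opoly_def by (intro step_vec_concat) (auto simp del: upt_Suc intro: step_vec_vscale step_vec_Xop_power)

lemma opoly_coeff_conv_sum:
  "degree p < n \<Longrightarrow> opoly_coeff q p k u = (\<Sum>i<n. coeff p i * vec_coeff ((Xop q t ^^ i) Omega) k u)"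
  unfolding opoly_coeff_def by (intro sum.mono_neutral_left) (auto simp: coeff_eq_0)

lemma opoly_coeff_diff: "opoly_coeff q (p - r) k u = opoly_coeff q p k u - opoly_coeff q r k u"
  using degree_diff_le_max[of p r]
  by (simp add: opoly_coeff_conv_sum[of _ "Suc (max (degree p) (degree r))"] sum_subtractf left_diff_distrib)

lemma opoly_coeff_smult: "opoly_coeff q (smult c p) k u = c * opoly_coeff q p k u"
  using degree_smult_le[of c p]
  by (simp add: opoly_coeff_conv_sum[of _ "Suc (degree p)"] sum_distrib_left algebra_simps)

lemma opoly_coeff_pCons_0:
  "opoly_coeff q (pCons 0 p) k u = field_coeff q (indicator {0..<t}) (opoly_coeff q p) k u"
proof -
  have "opoly_coeff q (pCons 0 p) k u
      = (\<Sum>i<Suc (Suc (degree p)). coeff (pCons 0 p) i * vec_coeff ((Xop q t ^^ i) Omega) k u)"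
    using degree_pCons_le[of 0 p] by (intro opoly_coeff_conv_sum) simp
  also have "\<dots> = (\<Sum>i<Suc (degree p). coeff p i * field_coeff q (indicator {0..<t}) (vec_coeff ((Xop q t ^^ i) Omega)) k u)"
    by (subst sum.lessThan_Suc_shift) (simp del: funpow.simps add: vec_coeff_Xop_power_Suc)
  also have "\<dots> = field_coeff q (indicator {0..<t}) (opoly_coeff q p) k u"
    unfolding opoly_coeff_def by (rule field_coeff_sum[symmetric]) simp
  finally show ?thesis .
qed

lemma indicator_whole_at_node: "j < N \<Longrightarrow> indicator {0..<t} (as ! j) = (1::real)"
  using indicator_initial_at_node[of N j] by (simp add: last_node[symmetric])

(* (\<lambda>k u. if k = n then 1 else 0) is the coefficient array of the n-th tensor power of
   1_[0,t); on it X(t) acts exactly by the three-term recursion of C_(q,n). *)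
lemma field_coeff_whole_delta:
  assumes u: "cell_indices k u"
  shows "field_coeff q (indicator {0..<t}) (\<lambda>k u. if k = n then 1 else 0) k u
     = (if k = Suc n then 1 else 0) + qnum q n * (if k = n then 1 else 0)
       + t * qnum q n * (if Suc k = n then 1 else 0)"
proof -
  have creation: "(if k = 0 then 0 else indicator {0..<t} (as ! u 0) * (if k - 1 = n then 1 else 0))
      = (if k = Suc n then 1 else (0::real))"
    using u indicator_whole_at_node[of "u 0"] by (auto simp: cell_indices_def)
  have annihilation: "(\<Sum>p<Suc k. q ^ p * (\<Sum>i<N. indicator {0..<t} (as ! i) * width i * (if Suc k = n then 1 else 0)))
      = t * qnum q n * (if Suc k = n then 1 else 0)"
  proof -
    have "(\<Sum>i<N. indicator {0..<t} (as ! i) * width i * c) = t * c" for c :: real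
      using sum_width by (simp add: indicator_whole_at_node flip: sum_distrib_right)
    then show ?thesis
      by (simp only:) (cases "Suc k = n", simp_all add: qnum_def sum_distrib_left mult_ac)
  qed
  have preservation: "(\<Sum>p<k. q ^ p * indicator {0..<t} (as ! u 0) * (if k = n then 1 else 0))
      = qnum q n * (if k = n then 1 else 0)"
    using u indicator_whole_at_node[of "u 0"] by (cases k) (auto simp: qnum_def cell_indices_def sum_distrib_right)
  show ?thesis
    unfolding field_coeff_def creation annihilation preservation by simp
qed

lemma opoly_coeff_one: "opoly_coeff q 1 k u = (if k = 0 then 1 else 0)"
  by (simp add: opoly_coeff_def vec_coeff_Omega)

lemma opoly_coeff_Cq:
  "cell_indices k u \<Longrightarrow> opoly_coeff q (Cq q t m) k u = (if k = m then 1 else 0)"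
proof (induction m arbitrary: k u rule: induct_nat_012)
  case 0
  then show ?case by (simp add: opoly_coeff_one)
next
  case 1
  have "Cq q t (Suc 0) = pCons 0 1"
    by (simp add: qnum_def)
  then have "opoly_coeff q (Cq q t (Suc 0)) k u = field_coeff q (indicator {0..<t}) (opoly_coeff q 1) k u"
    by (simp only: opoly_coeff_pCons_0)
  also have "opoly_coeff q 1 = (\<lambda>k u. if k = 0 then 1 else 0)"
    by (intro ext) (rule opoly_coeff_one)
  finally show ?case
    using field_coeff_whole_delta[OF 1, of q 0] by (simp add: qnum_def)
next
  case (ge2 m)
  have "opoly_coeff q (Cq q t (Suc (Suc m))) k u
      = field_coeff q (indicator {0..<t}) (opoly_coeff q (Cq q t (Suc m))) k u
        - qnum q (Suc m) * opoly_coeff q (Cq q t (Suc m)) k u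
        - t * qnum q (Suc m) * opoly_coeff q (Cq q t m) k u"
    by (simp add: opoly_coeff_diff opoly_coeff_smult opoly_coeff_pCons_0)
  also have "field_coeff q (indicator {0..<t}) (opoly_coeff q (Cq q t (Suc m))) k u
      = field_coeff q (indicator {0..<t}) (\<lambda>k u. if k = Suc m then 1 else 0) k u"
    using ge2 by (intro field_coeff_cong) simp_all
  finally show ?case
    using ge2 field_coeff_whole_delta[OF ge2.prems, of q "Suc m"] by simp
qed

section \<open>The q-inner product in coefficients\<close>

definition cell_weight :: "nat \<Rightarrow> (nat \<Rightarrow> nat) \<Rightarrow> real" where
  "cell_weight k u = (\<Prod>j<k. width (u j))"

abbreviation multi_indices :: "nat \<Rightarrow> (nat \<Rightarrow> nat) set" where
  "multi_indices k \<equiv> PiE {..<k} (\<lambda>_. {..<N})"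

definition gram :: "real \<Rightarrow> coeffs \<Rightarrow> coeffs \<Rightarrow> nat \<Rightarrow> real" where
  "gram q F G k = (\<Sum>\<sigma> | \<sigma> permutes {..<k}. q ^ inversions_of k \<sigma> *
      (\<Sum>u\<in>multi_indices k. cell_weight k u * F k u * G k (u \<circ> inv \<sigma>)))"

lemma gram_sum_left:
  assumes "finite A"
  shows "gram q (\<lambda>k u. \<Sum>a\<in>A. c a * F a k u) G k = (\<Sum>a\<in>A. c a * gram q (F a) G k)"
  using assms
  by (induction A rule: finite_induct) (simp_all add: gram_def algebra_simps sum.distrib sum_distrib_left)

lemma gram_sum_right:
  assumes "finite B"
  shows "gram q F (\<lambda>k u. \<Sum>b\<in>B. d b * G b k u) k = (\<Sum>b\<in>B. d b * gram q F (G b) k)"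
  using assms
  by (induction B rule: finite_induct) (simp_all add: gram_def algebra_simps sum.distrib sum_distrib_left)

lemma qip_eq_gram:
  assumes gs: "\<forall>g\<in>set gs. step_fun g" and hs: "\<forall>h\<in>set hs. step_fun h"
  shows "qip q gs hs = gram q (tensor_coeff gs) (tensor_coeff hs) (length gs)"
proof (cases "length gs = length hs")
  case False
  then show ?thesis by (simp add: qip_def gram_def tensor_coeff_def)
next
  case True
  define k where "k = length gs"
  have "(\<Prod>j<k. l2inner (gs ! j) (hs ! \<sigma> j))
      = (\<Sum>u\<in>multi_indices k. cell_weight k u * tensor_coeff gs k u * tensor_coeff hs k (u \<circ> inv \<sigma>))"
    if \<sigma>: "\<sigma> permutes {..<k}" for \<sigma>
  proof -
    have "(\<Prod>j<k. l2inner (gs ! j) (hs ! \<sigma> j)) = (\<Prod>j<k. \<Sum>i<N. (gs ! j) (as ! i) * (hs ! \<sigma> j) (as ! i) * width i)"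
      using gs hs True permutes_in_image[OF \<sigma>] by (intro prod.cong refl l2inner_step_fun) (auto simp: k_def)
    also have "\<dots> = (\<Sum>u\<in>multi_indices k. \<Prod>j<k. (gs ! j) (as ! u j) * (hs ! \<sigma> j) (as ! u j) * width (u j))"
      by (rule prod_sum_PiE) auto
    also have "\<dots> = (\<Sum>u\<in>multi_indices k. cell_weight k u * tensor_coeff gs k u * tensor_coeff hs k (u \<circ> inv \<sigma>))"
      using True prod_permutes_inv[OF \<sigma>, of "\<lambda>l x. (hs ! l) (as ! x)"]
      by (intro sum.cong refl) (simp add: cell_weight_def tensor_coeff_def prod.distrib k_def mult_ac)
    finally show ?thesis .
  qed
  moreover have k: "length hs = k" using True by (simp add: k_def)
  ultimately show ?thesis
    unfolding qip_def gram_def k_def[symmetric] k if_P[OF refl] by (intro sum.cong refl) auto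
qed

lemma qip_eq_sum_gram:
  assumes "\<forall>g\<in>set gs. step_fun g" "\<forall>h\<in>set hs. step_fun h" "finite K" "length gs \<in> K"
  shows "qip q gs hs = (\<Sum>k\<in>K. gram q (tensor_coeff gs) (tensor_coeff hs) k)"
proof -
  have "gram q (tensor_coeff gs) (tensor_coeff hs) k = 0" if "k \<noteq> length gs" for k
    using that by (simp add: gram_def tensor_coeff_def)
  then show ?thesis
    using assms by (simp add: qip_eq_gram sum.remove[of _ "length gs"] sum.neutral)
qed

lemma vinner_eq_sum_gram:
  assumes "step_vec x" "step_vec y"
  shows "vinner q x y = (\<Sum>k\<in>(\<lambda>(c, gs). length gs) ` set x. gram q (vec_coeff x) (vec_coeff y) k)"
proof -
  define K where "K = (\<lambda>(c, gs). length gs) ` set x"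
  define c where "c a = fst (x ! a)" for a
  define gs where "gs a = snd (x ! a)" for a
  define d where "d b = fst (y ! b)" for b
  define hs where "hs b = snd (y ! b)" for b
  have "vinner q x y = (\<Sum>a<length x. \<Sum>b<length y. c a * d b * qip q (gs a) (hs b))"
    unfolding vinner_def sum_list_sum_nth c_def d_def gs_def hs_def
    by (simp add: case_prod_beta atLeast0LessThan sum_distrib_left)
  also have "\<dots> = (\<Sum>a<length x. \<Sum>b<length y. \<Sum>k\<in>K.
      c a * d b * gram q (tensor_coeff (gs a)) (tensor_coeff (hs b)) k)"
  proof (intro sum.cong refl)
    fix a b assume "a \<in> {..<length x}" "b \<in> {..<length y}"
    then have "x ! a \<in> set x" "y ! b \<in> set y" by auto
    then have "\<forall>g\<in>set (gs a). step_fun g" "\<forall>h\<in>set (hs b). step_fun h" "length (gs a) \<in> K"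
      using assms by (auto simp: step_vec_def gs_def hs_def K_def case_prod_beta)
    then have "qip q (gs a) (hs b) = (\<Sum>k\<in>K. gram q (tensor_coeff (gs a)) (tensor_coeff (hs b)) k)"
      by (intro qip_eq_sum_gram) (simp_all add: K_def)
    then show "c a * d b * qip q (gs a) (hs b)
        = (\<Sum>k\<in>K. c a * d b * gram q (tensor_coeff (gs a)) (tensor_coeff (hs b)) k)"
      by (simp add: sum_distrib_left)
  qed
  also have "\<dots> = (\<Sum>a<length x. \<Sum>k\<in>K. \<Sum>b<length y.
      c a * d b * gram q (tensor_coeff (gs a)) (tensor_coeff (hs b)) k)"
    by (rule sum.cong[OF refl]) (rule sum.swap)
  also have "\<dots> = (\<Sum>k\<in>K. \<Sum>a<length x. \<Sum>b<length y.
      c a * d b * gram q (tensor_coeff (gs a)) (tensor_coeff (hs b)) k)"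
    by (rule sum.swap[where B = K])
  also have "\<dots> = (\<Sum>k\<in>K. gram q (vec_coeff x) (vec_coeff y) k)"
    unfolding vec_coeff_conv_sum[abs_def] c_def[symmetric] d_def[symmetric] gs_def[symmetric] hs_def[symmetric]
    by (simp add: gram_sum_left gram_sum_right sum_distrib_left mult.assoc)
  finally show ?thesis unfolding K_def .
qed

section \<open>The error estimate\<close>

lemma cell_indices_multi_indices: "u \<in> multi_indices k \<Longrightarrow> cell_indices k u"
  by (auto simp: cell_indices_def PiE_def Pi_def)

lemma cell_indices_comp_inv:
  assumes "\<sigma> permutes {..<k}" "cell_indices k u"
  shows "cell_indices k (u \<circ> inv \<sigma>)"
  using assms permutes_in_image[OF permutes_inv[OF assms(1)]] by (auto simp: cell_indices_def)

lemma cell_weight_nonneg: "u \<in> multi_indices k \<Longrightarrow> 0 \<le> cell_weight k u"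
  unfolding cell_weight_def by (intro prod_nonneg) (auto intro: width_nonneg)

lemma abs_gram_le:
  assumes q: "\<bar>q\<bar> \<le> 1" and F: "\<And>u. cell_indices k u \<Longrightarrow> \<bar>F k u\<bar> \<le> 1"
  shows "\<bar>gram q F F k\<bar> \<le> fact k * (\<Sum>u\<in>multi_indices k. cell_weight k u * \<bar>F k u\<bar>)"
proof -
  let ?S = "\<Sum>u\<in>multi_indices k. cell_weight k u * \<bar>F k u\<bar>"
  have "\<bar>q ^ inversions_of k \<sigma> * (\<Sum>u\<in>multi_indices k. cell_weight k u * F k u * F k (u \<circ> inv \<sigma>))\<bar> \<le> ?S"
    if \<sigma>: "\<sigma> permutes {..<k}" for \<sigma>
  proof -
    have "\<bar>cell_weight k u * F k u * F k (u \<circ> inv \<sigma>)\<bar> \<le> cell_weight k u * \<bar>F k u\<bar>"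
      if "u \<in> multi_indices k" for u
    proof -
      have "\<bar>F k (u \<circ> inv \<sigma>)\<bar> \<le> 1"
        using F cell_indices_comp_inv[OF \<sigma> cell_indices_multi_indices[OF that]] by blast
      then show ?thesis
        using cell_weight_nonneg[OF that] by (simp add: abs_mult mult_left_le)
    qed
    then have "\<bar>\<Sum>u\<in>multi_indices k. cell_weight k u * F k u * F k (u \<circ> inv \<sigma>)\<bar> \<le> ?S"
      by (intro order_trans[OF sum_abs] sum_mono)
    moreover have "\<bar>q ^ inversions_of k \<sigma>\<bar> \<le> 1"
      using q by (simp add: power_abs power_le_one)
    ultimately have "\<bar>q ^ inversions_of k \<sigma>\<bar> * \<bar>\<Sum>u\<in>multi_indices k. cell_weight k u * F k u * F k (u \<circ> inv \<sigma>)\<bar> \<le> 1 * ?S"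
      by (intro mult_mono) simp_all
    then show ?thesis by (simp add: abs_mult)
  qed
  then have "\<bar>gram q F F k\<bar> \<le> (\<Sum>\<sigma> | \<sigma> permutes {..<k}. ?S)"
    unfolding gram_def by (intro order_trans[OF sum_abs] sum_mono) auto
  also have "\<dots> = fact k * ?S"
    using card_permutations[of "{..<k}" k] by simp
  finally show ?thesis .
qed

lemma vinner_self_le:
  assumes "\<bar>q\<bar> \<le> 1" "step_vec v"
    and supp: "\<And>k u. cell_indices k u \<Longrightarrow> k \<noteq> m \<Longrightarrow> vec_coeff v k u = 0"
    and bound: "\<And>u. cell_indices m u \<Longrightarrow> \<bar>vec_coeff v m u\<bar> \<le> 1"
  shows "vinner q v v \<le> fact m * (\<Sum>u\<in>multi_indices m. cell_weight m u * \<bar>vec_coeff v m u\<bar>)"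
proof -
  define K where "K = (\<lambda>(c, gs). length gs) ` set v"
  have "gram q (vec_coeff v) (vec_coeff v) k = 0" if "k \<noteq> m" for k
    using supp that by (auto simp: gram_def cell_indices_multi_indices intro!: sum.neutral)
  then have "vinner q v v = (\<Sum>k\<in>K. if k = m then gram q (vec_coeff v) (vec_coeff v) m else 0)"
    unfolding vinner_eq_sum_gram[OF assms(2) assms(2)] K_def[symmetric] by (intro sum.cong) auto
  also have "\<dots> \<le> \<bar>gram q (vec_coeff v) (vec_coeff v) m\<bar>"
    by (auto simp: K_def)
  also have "\<dots> \<le> fact m * (\<Sum>u\<in>multi_indices m. cell_weight m u * \<bar>vec_coeff v m u\<bar>)"
    using assms(1) bound by (rule abs_gram_le)
  finally show ?thesis .
qed

lemma sum_width_sq_le: "(\<Sum>c<N. width c ^ 2) \<le> mesh as * t"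
proof -
  have "(\<Sum>c<N. width c ^ 2) \<le> (\<Sum>c<N. mesh as * width c)"
    using width_le_mesh width_nonneg by (intro sum_mono) (simp add: power2_eq_square mult_right_mono)
  then show ?thesis by (simp add: sum_width flip: sum_distrib_left)
qed

lemma sum_weight_coincident:
  assumes ab: "a < m" "b < m" "a \<noteq> b"
  shows "(\<Sum>u\<in>multi_indices m. if u a = u b then cell_weight m u else 0) = (\<Sum>c<N. width c ^ 2) * t ^ (m - 2)"
proof -
  have ab': "a \<in> {..<m}" "b \<in> {..<m}" "a \<noteq> b" using ab by auto
  define F where "F c j i = width i * (if j = a \<or> j = b then of_bool (i = c) else 1)" for c j i
  have "(if u a = u b then cell_weight m u else 0) = (\<Sum>c<N. \<Prod>j<m. F c j (u j))"
    if "u \<in> multi_indices m" for u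
  proof -
    have "(\<Prod>j<m. F c j (u j)) = (if c = u a then if u a = u b then cell_weight m u else 0 else 0)" for c
      unfolding F_def prod.distrib cell_weight_def prod_if_two_points[OF finite_lessThan ab'] by auto
    moreover have "u a < N" using that ab by auto
    ultimately show ?thesis by simp
  qed
  then have "(\<Sum>u\<in>multi_indices m. if u a = u b then cell_weight m u else 0)
      = (\<Sum>c<N. \<Sum>u\<in>multi_indices m. \<Prod>j<m. F c j (u j))"
    by (simp add: sum.swap[of _ "{..<N}"])
  also have "\<dots> = (\<Sum>c<N. \<Prod>j<m. \<Sum>i<N. F c j i)"
    by (intro sum.cong refl prod_sum_PiE[symmetric]) auto
  also have "\<dots> = (\<Sum>c<N. \<Prod>j<m. if j = a \<or> j = b then width c else t)"
    by (intro sum.cong prod.cong refl) (auto simp: F_def sum_width)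
  also have "\<dots> = (\<Sum>c<N. width c ^ 2 * t ^ (m - 2))"
    using ab' by (intro sum.cong refl) (simp add: prod_if_two_points card_Diff_subset power2_eq_square numeral_2_eq_2)
  finally show ?thesis by (simp add: sum_distrib_right)
qed

lemma weight_coincident_le:
  assumes "a < m" "b < m" "a \<noteq> b"
  shows "(\<Sum>u\<in>multi_indices m. if u a = u b then cell_weight m u else 0) \<le> mesh as * t ^ (m - 1)"
proof -
  have "m - 1 = Suc (m - 2)" using assms by linarith
  then show ?thesis
    using mult_right_mono[OF sum_width_sq_le zero_le_power[OF t_nonneg, of "m - 2"]]
    by (simp add: sum_weight_coincident[OF assms] mult.assoc)
qed

lemma weight_non_injective_le:
  "(\<Sum>u\<in>multi_indices m. if inj_on u {..<m} then 0 else cell_weight m u) \<le> real m ^ 2 * mesh as * t ^ (m - 1)"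
proof -
  let ?C = "\<lambda>a b u. if a \<noteq> b \<and> u a = u b then cell_weight m u else 0"
  have "(if inj_on u {..<m} then 0 else cell_weight m u) \<le> (\<Sum>a<m. \<Sum>b<m. ?C a b u)"
    if u: "u \<in> multi_indices m" for u
  proof (cases "inj_on u {..<m}")
    case False
    then obtain a b where ab: "a < m" "b < m" "a \<noteq> b" "u a = u b" by (auto simp: inj_on_def)
    have "cell_weight m u = ?C a b u" using ab by simp
    also have "\<dots> \<le> (\<Sum>b<m. ?C a b u)"
      using ab cell_weight_nonneg[OF u] by (intro member_le_sum) auto
    also have "\<dots> \<le> (\<Sum>a<m. \<Sum>b<m. ?C a b u)"
      using ab cell_weight_nonneg[OF u] by (intro member_le_sum sum_nonneg) auto
    finally show ?thesis using False by simp
  qed (use cell_weight_nonneg[OF u] in \<open>auto intro!: sum_nonneg\<close>)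
  then have "(\<Sum>u\<in>multi_indices m. if inj_on u {..<m} then 0 else cell_weight m u)
      \<le> (\<Sum>u\<in>multi_indices m. \<Sum>a<m. \<Sum>b<m. ?C a b u)"
    by (rule sum_mono)
  also have "\<dots> = (\<Sum>a<m. \<Sum>b<m. \<Sum>u\<in>multi_indices m. ?C a b u)"
    by (subst sum.swap) (rule sum.cong[OF refl], rule sum.swap)
  also have "\<dots> \<le> (\<Sum>a<m. \<Sum>b<m. mesh as * t ^ (m - 1))"
  proof (intro sum_mono)
    fix a b assume "a \<in> {..<m}" "b \<in> {..<m}"
    then show "(\<Sum>u\<in>multi_indices m. ?C a b u) \<le> mesh as * t ^ (m - 1)"
      using weight_coincident_le[of a m b] mesh_nonneg t_nonneg by (cases "a = b") auto
  qed
  finally show ?thesis by (simp add: power2_eq_square)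
qed

lemma vinner_psi_error_le:
  fixes m :: nat
  assumes "\<bar>q\<bar> \<le> 1"
  defines "D \<equiv> vsub (psi_vec q m as) (opoly (Cq q t m) (Xop q t) Omega)"
  shows "vinner q D D \<le> fact m * real m ^ 2 * t ^ (m - 1) * mesh as"
proof -
  have coeff: "vec_coeff D k u = (if k = m \<and> \<not> inj_on u {..<m} then -1 else 0)" if "cell_indices k u" for k u
    using that by (simp add: D_def vec_coeff_psi_vec vec_coeff_opoly opoly_coeff_Cq)
  have "vinner q D D \<le> fact m * (\<Sum>u\<in>multi_indices m. cell_weight m u * \<bar>vec_coeff D m u\<bar>)"
    using assms(1) coeff unfolding D_def
    by (intro vinner_self_le step_vec_vsub step_vec_psi_vec step_vec_opoly) auto
  also have "(\<Sum>u\<in>multi_indices m. cell_weight m u * \<bar>vec_coeff D m u\<bar>)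
      = (\<Sum>u\<in>multi_indices m. if inj_on u {..<m} then 0 else cell_weight m u)"
    using coeff cell_indices_multi_indices by (intro sum.cong) auto
  also have "fact m * \<dots> \<le> fact m * (real m ^ 2 * mesh as * t ^ (m - 1))"
    by (intro mult_left_mono weight_non_injective_le) simp
  finally show ?thesis by (simp add: mult_ac)
qed

end

theorem proposition5p5:
  fixes q t :: real and m :: nat
  assumes "-1 < q" and "q < 1" and "0 < t"
  shows "\<forall>\<epsilon>>0. \<exists>\<delta>>0. \<forall>as. is_subdiv t as \<and> mesh as < \<delta> \<longrightarrow>
           vnorm q (vsub (psi_vec q m as) (opoly (Cq q t m) (Xop q t) Omega)) < \<epsilon>"
proof (intro allI impI)
  fix \<epsilon> :: real assume "0 < \<epsilon>"
  define C where "C = fact m * real m ^ 2 * t ^ (m - 1)"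
  have "0 \<le> C" using \<open>0 < t\<close> by (simp add: C_def)
  show "\<exists>\<delta>>0. \<forall>as. is_subdiv t as \<and> mesh as < \<delta> \<longrightarrow>
           vnorm q (vsub (psi_vec q m as) (opoly (Cq q t m) (Xop q t) Omega)) < \<epsilon>"
  proof (intro exI[of _ "\<epsilon>\<^sup>2 / (C + 1)"] conjI allI impI)
    show "0 < \<epsilon>\<^sup>2 / (C + 1)" using \<open>0 < \<epsilon>\<close> \<open>0 \<le> C\<close> by simp
    fix as assume as: "is_subdiv t as \<and> mesh as < \<epsilon>\<^sup>2 / (C + 1)"
    then interpret subdivision t as by unfold_locales simp
    have "\<bar>q\<bar> \<le> 1" using assms by auto
    then show "vnorm q (vsub (psi_vec q m as) (opoly (Cq q t m) (Xop q t) Omega)) < \<epsilon>"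
      unfolding vnorm_def using vinner_psi_error_le as \<open>0 < \<epsilon>\<close> \<open>0 \<le> C\<close>
      by (intro sqrt_less_of_le_mult[where C = C and h = "mesh as"]) (auto simp: C_def)
  qed
qed

end
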